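(* For every MPDA $\mathcal A$ there is a pop-normalized MPDA $\mathcal A'$ with $L(\mathcal A')=L(\mathcal A)$.
   Context: A Moore push-down automaton (MPDA) is $\mathcal A=(Q,\Sigma,\Gamma,\delta,\tau,I,F)$ with finite sets $Q$ (states), $\Sigma$ (input symbols), $\Gamma$ (stack symbols), transitions $\delta\subseteq(Q\times\Gamma^{\le1}\times\Gamma^{\le1}\times Q)\setminus(Q\times\Gamma\times\Gamma\times Q)$ with $\Gamma^{\le1}=\{\varepsilon\}\cup\Gamma$, output function $\tau:Q\to\Sigma$, and $I,F\subseteq Q$. Configurations are $\langle q,\alpha\rangle\in Q\times\Gamma^*$; moves $\langle q,\gamma\alpha\rangle\vdash\langle q',\gamma'\alpha\rangle$ for $(q,\gamma,\gamma',q')\in\delta$ whenever $\gamma\alpha\ne\varepsilon$. Initial configurations: $q\in I$, $\alpha\in\Gamma$; final: $q\in F$, $\alpha=\varepsilon$. $L(\mathcal A)$ is the set of strings $\tau(q_0)\cdots\tau(q_n)$ for accepting runs $\langle q_0,\alpha_0\rangle\vdash\cdots\vdash\langle q_n,\alpha_n\rangle$ from an initial to a final configuration. The MPDA is pop-normalized if there is a map $\mathrm{return}:\Gamma\to Q$ such that $q'=\mathrm{return}(\gamma)$ for every transition $(q,\gamma,\varepsilon,q')\in\delta$ with $\gamma\in\Gamma$. *)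

theory Defs
  imports Main
begin

text \<open>Moore push-down automata. A transition (q, g, g', q') uses g, g' :: 'g option
  for elements of Gamma^{<=1} (None = epsilon).\<close>

record ('q, 'a, 'g) mpda =
  states :: "'q set"
  inputs :: "'a set"
  stack  :: "'g set"
  trans  :: "('q \<times> 'g option \<times> 'g option \<times> 'q) set"
  out    :: "'q \<Rightarrow> 'a"
  init   :: "'q set"
  fin    :: "'q set"

definition opt_list :: "'g option \<Rightarrow> 'g list" where
  "opt_list x = (case x of None \<Rightarrow> [] | Some g \<Rightarrow> [g])"

definition is_mpda :: "('q, 'a, 'g) mpda \<Rightarrow> bool" where
  "is_mpda A \<longleftrightarrow>
     finite (states A) \<and> finite (inputs A) \<and> finite (stack A) \<and>
     (\<forall>(q, g, g', q') \<in> trans A.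
         q \<in> states A \<and> q' \<in> states A \<and>
         set_option g \<subseteq> stack A \<and> set_option g' \<subseteq> stack A \<and>
         \<not> (g \<noteq> None \<and> g' \<noteq> None)) \<and>
     (\<forall>q \<in> states A. out A q \<in> inputs A) \<and>
     init A \<subseteq> states A \<and> fin A \<subseteq> states A"

definition mstep :: "('q, 'a, 'g) mpda \<Rightarrow> 'q \<times> 'g list \<Rightarrow> 'q \<times> 'g list \<Rightarrow> bool" where
  "mstep A c c' \<longleftrightarrow>
     (\<exists>g g' \<alpha>. (fst c, g, g', fst c') \<in> trans A \<and>
        snd c = opt_list g @ \<alpha> \<and> snd c' = opt_list g' @ \<alpha> \<and> snd c \<noteq> [])"

definition accepting_run :: "('q, 'a, 'g) mpda \<Rightarrow> ('q \<times> 'g list) list \<Rightarrow> bool" where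
  "accepting_run A cs \<longleftrightarrow>
     cs \<noteq> [] \<and>
     (\<forall>i. Suc i < length cs \<longrightarrow> mstep A (cs ! i) (cs ! Suc i)) \<and>
     fst (hd cs) \<in> init A \<and> (\<exists>g \<in> stack A. snd (hd cs) = [g]) \<and>
     fst (last cs) \<in> fin A \<and> snd (last cs) = []"

definition lang :: "('q, 'a, 'g) mpda \<Rightarrow> 'a list set" where
  "lang A = {map (\<lambda>c. out A (fst c)) cs | cs. accepting_run A cs}"

definition pop_normalized :: "('q, 'a, 'g) mpda \<Rightarrow> bool" where
  "pop_normalized A \<longleftrightarrow>
     (\<exists>ret. (\<forall>g \<in> stack A. ret g \<in> states A) \<and>
        (\<forall>q g q'. (q, Some g, None, q') \<in> trans A \<longrightarrow> q' = ret g))"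

end

theory Submission
  imports Defs "HOL-Library.Countable_Set"
begin

text \<open>Let every pushed symbol carry a guess of the state reached by popping it, and let a
  pop move only to the state guessed for the popped symbol; the return map then just reads off
  the guess. Every run of the new automaton forgets to a run of the old one. Conversely, an
  accepting run of the old automaton ends with the empty stack, so every stack cell is popped
  eventually, and annotating each cell with the state reached at that moment turns the run into
  a run of the new automaton. Finally, states and stack symbols are renamed injectively into
  the natural numbers.\<close>

lemma opt_list_map_option: "opt_list (map_option h g) = map h (opt_list g)"
  by (cases g) (simp_all add: opt_list_def)

lemma mstepI:
  assumes "(fst c, g, g', fst c') \<in> trans A" "snd c = opt_list g @ \<alpha>" "snd c' = opt_list g' @ \<alpha>"
    "snd c \<noteq> []"
  shows "mstep A c c'"
  using assms unfolding mstep_def by blast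

lemma is_mpda_transD:
  assumes "is_mpda A" "(q, g, g', q') \<in> trans A"
  shows "q \<in> states A" "q' \<in> states A" "set_option g \<subseteq> stack A" "set_option g' \<subseteq> stack A"
    "g = None \<or> g' = None"
  using assms unfolding is_mpda_def by fast+

lemma accepting_run_states:
  assumes "is_mpda A" "accepting_run A cs" "i < length cs"
  shows "fst (cs ! i) \<in> states A"
proof (cases i)
  case 0
  then show ?thesis
    using assms unfolding accepting_run_def is_mpda_def by (auto simp: hd_conv_nth)
next
  case (Suc j)
  then have "mstep A (cs ! j) (cs ! i)"
    using assms(2,3) unfolding accepting_run_def by auto
  then show ?thesis
    unfolding mstep_def using is_mpda_transD(2)[OF assms(1)] by blast
qed

lemma accepting_run_Suc_less_length:
  assumes "accepting_run A cs" "i < length cs" "snd (cs ! i) \<noteq> []"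
  shows "Suc i < length cs"
proof (rule ccontr)
  assume "\<not> Suc i < length cs"
  then have "i = length cs - 1"
    using assms(2) by simp
  moreover have "cs \<noteq> []"
    using assms(2) by auto
  ultimately have "cs ! i = last cs"
    by (simp add: last_conv_nth)
  then show False
    using assms(1,3) unfolding accepting_run_def by simp
qed

definition mpda_hom ::
    "('q \<Rightarrow> 'q') \<Rightarrow> ('g \<Rightarrow> 'g') \<Rightarrow> ('q, 'a, 'g) mpda \<Rightarrow> ('q', 'a, 'g') mpda \<Rightarrow> bool" where
  "mpda_hom f h A B \<longleftrightarrow>
     (\<forall>(q, g, g', q') \<in> trans A. (f q, map_option h g, map_option h g', f q') \<in> trans B) \<and>
     f ` init A \<subseteq> init B \<and> f ` fin A \<subseteq> fin B \<and> h ` stack A \<subseteq> stack B \<and>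
     (\<forall>q \<in> states A. out B (f q) = out A q)"

lemma mstep_map:
  assumes "\<forall>(q, g, g', q') \<in> trans A. (f q, map_option h g, map_option h g', f q') \<in> trans B"
    and "mstep A c c'"
  shows "mstep B (map_prod f (map h) c) (map_prod f (map h) c')"
proof -
  obtain g g' \<alpha> where t: "(fst c, g, g', fst c') \<in> trans A"
    and "snd c = opt_list g @ \<alpha>" "snd c' = opt_list g' @ \<alpha>" "snd c \<noteq> []"
    using assms(2) unfolding mstep_def by blast
  moreover have "(f (fst c), map_option h g, map_option h g', f (fst c')) \<in> trans B"
    using bspec[OF assms(1) t] by simp
  ultimately show ?thesis
    by (intro mstepI[where g = "map_option h g" and g' = "map_option h g'" and \<alpha> = "map h \<alpha>"])
      (simp_all add: map_prod_def split_beta opt_list_map_option)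
qed

lemma lang_subset_if_mpda_hom:
  assumes "is_mpda A" "mpda_hom f h A B"
  shows "lang A \<subseteq> lang B"
proof
  fix w assume "w \<in> lang A"
  then obtain cs where run: "accepting_run A cs" and w: "w = map (\<lambda>c. out A (fst c)) cs"
    unfolding lang_def by blast
  let ?cs = "map (map_prod f (map h)) cs"
  have run': "accepting_run B ?cs"
    using run assms(2) mstep_map[of A f h B] unfolding accepting_run_def mpda_hom_def
    by (auto simp: hd_map last_map map_prod_def split_beta)
  have "fst c \<in> states A" if "c \<in> set cs" for c
    using that accepting_run_states[OF assms(1) run] by (auto simp: in_set_conv_nth)
  then have "w = map (\<lambda>c. out B (fst c)) ?cs"
    using w assms(2) unfolding mpda_hom_def by (simp add: map_prod_def split_beta)
  with run' show "w \<in> lang B"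
    unfolding lang_def by blast
qed

definition map_mpda ::
    "('q \<Rightarrow> 'q') \<Rightarrow> ('g \<Rightarrow> 'g') \<Rightarrow> ('q, 'a, 'g) mpda \<Rightarrow> ('q', 'a, 'g') mpda" where
  "map_mpda f h A =
     \<lparr>states = f ` states A, inputs = inputs A, stack = h ` stack A,
      trans = (\<lambda>(q, g, g', q'). (f q, map_option h g, map_option h g', f q')) ` trans A,
      out = out A \<circ> inv_into (states A) f, init = f ` init A, fin = f ` fin A\<rparr>"

lemma is_mpda_map_mpda:
  assumes "is_mpda A"
  shows "is_mpda (map_mpda f h A)"
proof -
  have "q \<in> states (map_mpda f h A) \<and> q' \<in> states (map_mpda f h A) \<and>
      set_option g \<subseteq> stack (map_mpda f h A) \<and> set_option g' \<subseteq> stack (map_mpda f h A) \<and>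
      \<not> (g \<noteq> None \<and> g' \<noteq> None)"
    if tr: "(q, g, g', q') \<in> trans (map_mpda f h A)" for q g g' q'
  proof -
    obtain p x x' p' where t: "(p, x, x', p') \<in> trans A"
      and "(q, g, g', q') = (f p, map_option h x, map_option h x', f p')"
      using tr by (auto simp: map_mpda_def)
    then show ?thesis
      using is_mpda_transD[OF assms t] by (auto simp: map_mpda_def option.set_map)
  qed
  moreover have "out A (inv_into (states A) f q) \<in> inputs A" if "q \<in> f ` states A" for q
    using assms inv_into_into[OF that] unfolding is_mpda_def by blast
  ultimately show ?thesis
    using assms unfolding is_mpda_def by (auto simp: map_mpda_def image_mono)
qed

lemma mpda_hom_map_mpda:
  assumes "inj_on f (states A)"
  shows "mpda_hom f h A (map_mpda f h A)"
  using assms unfolding mpda_hom_def map_mpda_def by force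

lemma mpda_hom_map_mpda_inv:
  assumes "is_mpda A" "inj_on f (states A)" "inj_on h (stack A)"
  shows "mpda_hom (inv_into (states A) f) (inv_into (stack A) h) (map_mpda f h A) A"
proof -
  have "(inv_into (states A) f (f q), map_option (inv_into (stack A) h) (map_option h g),
         map_option (inv_into (stack A) h) (map_option h g'), inv_into (states A) f (f q'))
        = (q, g, g', q')" if "(q, g, g', q') \<in> trans A" for q g g' q'
    using is_mpda_transD[OF assms(1) that] assms(2,3)
    by (cases g; cases g') (auto simp: option.map_comp)
  then show ?thesis
    using assms unfolding mpda_hom_def map_mpda_def is_mpda_def by (fastforce simp: subset_iff)
qed

lemma lang_map_mpda:
  assumes "is_mpda A" "inj_on f (states A)" "inj_on h (stack A)"
  shows "lang (map_mpda f h A) = lang A"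
  using lang_subset_if_mpda_hom[OF assms(1) mpda_hom_map_mpda[OF assms(2)]]
    lang_subset_if_mpda_hom[OF is_mpda_map_mpda[OF assms(1)] mpda_hom_map_mpda_inv[OF assms]]
  by blast

lemma pop_normalized_map_mpda:
  assumes "is_mpda A" "inj_on h (stack A)" "pop_normalized A"
  shows "pop_normalized (map_mpda f h A)"
proof -
  obtain ret where ret: "\<forall>g \<in> stack A. ret g \<in> states A"
    "\<forall>q g q'. (q, Some g, None, q') \<in> trans A \<longrightarrow> q' = ret g"
    using assms(3) unfolding pop_normalized_def by blast
  show ?thesis
    unfolding pop_normalized_def
  proof (intro exI[of _ "f \<circ> ret \<circ> inv_into (stack A) h"] conjI allI impI ballI)
    fix n assume "n \<in> stack (map_mpda f h A)"
    then show "(f \<circ> ret \<circ> inv_into (stack A) h) n \<in> states (map_mpda f h A)"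
      using ret(1) by (auto simp: map_mpda_def inv_into_into)
  next
    fix p n p' assume "(p, Some n, None, p') \<in> trans (map_mpda f h A)"
    then obtain q g q' where "(q, Some g, None, q') \<in> trans A" "n = h g" "p' = f q'"
      by (auto simp: map_mpda_def eq_commute[of "Some n"])
    then show "p' = (f \<circ> ret \<circ> inv_into (stack A) h) n"
      using ret(2) is_mpda_transD(3)[OF assms(1)] assms(2) by fastforce
  qed
qed

subsection \<open>Annotating stack symbols with their return states\<close>

definition pop_normalize :: "('q, 'a, 'g) mpda \<Rightarrow> ('q, 'a, 'g \<times> 'q) mpda" where
  "pop_normalize A =
     \<lparr>states = states A, inputs = inputs A, stack = stack A \<times> states A,
      trans = {(q, map_option (\<lambda>x. (x, q')) g, map_option (\<lambda>x. (x, r)) g', q') | q g g' q' r.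
                 (q, g, g', q') \<in> trans A \<and> r \<in> states A},
      out = out A, init = init A, fin = fin A\<rparr>"

lemma pop_normalize_simps [simp]:
  "states (pop_normalize A) = states A" "inputs (pop_normalize A) = inputs A"
  "stack (pop_normalize A) = stack A \<times> states A" "out (pop_normalize A) = out A"
  "init (pop_normalize A) = init A" "fin (pop_normalize A) = fin A"
  by (simp_all add: pop_normalize_def)

lemma trans_pop_normalizeI:
  assumes "(q, g, g', q') \<in> trans A" "r \<in> states A"
  shows "(q, map_option (\<lambda>x. (x, q')) g, map_option (\<lambda>x. (x, r)) g', q') \<in> trans (pop_normalize A)"
  using assms unfolding pop_normalize_def by auto

lemma trans_pop_normalizeE:
  assumes "t \<in> trans (pop_normalize A)"
  obtains q g g' q' r where "t = (q, map_option (\<lambda>x. (x, q')) g, map_option (\<lambda>x. (x, r)) g', q')"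
    "(q, g, g', q') \<in> trans A" "r \<in> states A"
  using assms unfolding pop_normalize_def by auto

lemma is_mpda_pop_normalize:
  assumes "is_mpda A"
  shows "is_mpda (pop_normalize A)"
proof -
  have "case t of (q, g, g', q') \<Rightarrow> q \<in> states A \<and> q' \<in> states A \<and>
      set_option g \<subseteq> stack A \<times> states A \<and> set_option g' \<subseteq> stack A \<times> states A \<and>
      \<not> (g \<noteq> None \<and> g' \<noteq> None)"
    if "t \<in> trans (pop_normalize A)" for t
  proof (rule trans_pop_normalizeE[OF that])
    fix q g g' q' r
    assume "t = (q, map_option (\<lambda>x. (x, q')) g, map_option (\<lambda>x. (x, r)) g', q')"
      and t: "(q, g, g', q') \<in> trans A" and "r \<in> states A"
    with is_mpda_transD[OF assms t] show ?thesis
      by (cases g; cases g') simp_all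
  qed
  moreover have "finite (stack A \<times> states A)"
    using assms by (simp add: is_mpda_def)
  ultimately show ?thesis
    using assms unfolding is_mpda_def pop_normalize_simps by blast
qed

lemma pop_normalized_pop_normalize: "pop_normalized (pop_normalize A)"
  unfolding pop_normalized_def
  by (rule exI[of _ snd]) (auto simp: pop_normalize_def eq_commute[of "Some _"])

lemma mpda_hom_pop_normalize: "mpda_hom id fst (pop_normalize A) A"
  unfolding mpda_hom_def pop_normalize_def by (auto simp: option.map_comp comp_def option.map_ident)

fun map_with_height :: "(nat \<Rightarrow> 'x \<Rightarrow> 'y) \<Rightarrow> 'x list \<Rightarrow> 'y list" where
  "map_with_height f [] = []"
| "map_with_height f (x # xs) = f (length xs) x # map_with_height f xs"

lemma map_with_height_eq_Nil_iff [simp]: "map_with_height f xs = [] \<longleftrightarrow> xs = []"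
  by (cases xs) simp_all

lemma map_with_height_cong:
  "(\<And>k x. k < length xs \<Longrightarrow> f k x = f' k x) \<Longrightarrow> map_with_height f xs = map_with_height f' xs"
  by (induction xs) auto

lemma map_with_height_opt_list_append:
  "map_with_height f (opt_list g @ xs) = opt_list (map_option (f (length xs)) g) @ map_with_height f xs"
  by (cases g) (simp_all add: opt_list_def)

text \<open>The state reached when the cell of \<open>cs ! i\<close> lying on \<open>k\<close> other cells is popped. If it is
  never popped the value is junk; in an accepting run every cell is popped.\<close>

definition return_state :: "('q \<times> 'g list) list \<Rightarrow> nat \<Rightarrow> nat \<Rightarrow> 'q" where
  "return_state cs i k = fst (cs ! (LEAST j. i < j \<and> length (snd (cs ! j)) \<le> k))"

lemma return_state_Suc:
  assumes "k < length (snd (cs ! Suc i))"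
  shows "return_state cs i k = return_state cs (Suc i) k"
proof -
  have "(\<lambda>j. i < j \<and> length (snd (cs ! j)) \<le> k) = (\<lambda>j. Suc i < j \<and> length (snd (cs ! j)) \<le> k)"
    using assms by (force simp: fun_eq_iff intro: Suc_lessI)
  then show ?thesis
    unfolding return_state_def by simp
qed

lemma return_state_pop:
  assumes "length (snd (cs ! Suc i)) \<le> k"
  shows "return_state cs i k = fst (cs ! Suc i)"
proof -
  have "(LEAST j. i < j \<and> length (snd (cs ! j)) \<le> k) = Suc i"
    by (rule Least_equality) (use assms in auto)
  then show ?thesis
    unfolding return_state_def by simp
qed

lemma return_state_in_states:
  assumes "is_mpda A" "accepting_run A cs" "Suc i < length cs"
  shows "return_state cs i k \<in> states A"
proof -
  let ?j = "LEAST j. i < j \<and> length (snd (cs ! j)) \<le> k"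
  have "snd (cs ! (length cs - 1)) = []"
    using assms(2) unfolding accepting_run_def by (auto simp: last_conv_nth)
  then have "?j \<le> length cs - 1"
    using assms(3) by (intro Least_le) simp
  then show ?thesis
    unfolding return_state_def using accepting_run_states[OF assms(1,2)] assms(3) by simp
qed

definition annotated_config :: "('q \<times> 'g list) list \<Rightarrow> nat \<Rightarrow> 'q \<times> ('g \<times> 'q) list" where
  "annotated_config cs i =
     (fst (cs ! i), map_with_height (\<lambda>k x. (x, return_state cs i k)) (snd (cs ! i)))"

lemma mstep_annotated_config:
  assumes "is_mpda A" "accepting_run A cs" "Suc i < length cs"
  shows "mstep (pop_normalize A) (annotated_config cs i) (annotated_config cs (Suc i))"
proof -
  let ?q = "fst (cs ! i)" and ?q' = "fst (cs ! Suc i)"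
  let ?ann = "\<lambda>i k x. (x, return_state cs i k)"
  obtain g g' \<alpha> where t: "(?q, g, g', ?q') \<in> trans A"
    and s: "snd (cs ! i) = opt_list g @ \<alpha>" and s': "snd (cs ! Suc i) = opt_list g' @ \<alpha>"
    and ne: "snd (cs ! i) \<noteq> []"
    using assms(2,3) unfolding accepting_run_def mstep_def by auto
  have below: "map_with_height (?ann i) \<alpha> = map_with_height (?ann (Suc i)) \<alpha>"
    using return_state_Suc[of _ cs i] s' by (intro map_with_height_cong) simp
  have popped: "map_option (?ann i (length \<alpha>)) g = map_option (\<lambda>x. (x, ?q')) g"
  proof (cases g)
    case (Some x)
    then have "g' = None"
      using is_mpda_transD(5)[OF assms(1) t] by simp
    then show ?thesis
      using Some s' return_state_pop[of cs i "length \<alpha>"] by (simp add: opt_list_def)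
  qed simp
  obtain r where r: "r \<in> states A"
    and pushed: "map_option (?ann (Suc i) (length \<alpha>)) g' = map_option (\<lambda>x. (x, r)) g'"
  proof (cases g')
    case None
    then show thesis
      using that[of ?q] is_mpda_transD(1)[OF assms(1) t] by simp
  next
    case (Some x)
    then have "Suc (Suc i) < length cs"
      using accepting_run_Suc_less_length[OF assms(2,3)] s' by (simp add: opt_list_def)
    then show thesis
      using that return_state_in_states[OF assms(1,2)] by blast
  qed
  have "(?q, map_option (\<lambda>x. (x, ?q')) g, map_option (\<lambda>x. (x, r)) g', ?q') \<in> trans (pop_normalize A)"
    using t r by (rule trans_pop_normalizeI)
  then show ?thesis
    using s s' ne below popped pushed
    by (intro mstepI[where g = "map_option (\<lambda>x. (x, ?q')) g" and g' = "map_option (\<lambda>x. (x, r)) g'"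
          and \<alpha> = "map_with_height (?ann i) \<alpha>"])
      (simp_all add: annotated_config_def map_with_height_opt_list_append opt_list_map_option)
qed

lemma lang_subset_pop_normalize:
  assumes "is_mpda A"
  shows "lang A \<subseteq> lang (pop_normalize A)"
proof
  fix w assume "w \<in> lang A"
  then obtain cs where run: "accepting_run A cs" and w: "w = map (\<lambda>c. out A (fst c)) cs"
    unfolding lang_def by blast
  let ?cs = "map (annotated_config cs) [0..<length cs]"
  have ne: "cs \<noteq> []"
    using run unfolding accepting_run_def by simp
  obtain g where g: "g \<in> stack A" "snd (cs ! 0) = [g]"
    using run ne unfolding accepting_run_def by (auto simp: hd_conv_nth)
  then have "Suc 0 < length cs"
    using accepting_run_Suc_less_length[OF run] ne by simp
  then have "return_state cs 0 0 \<in> states A"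
    using return_state_in_states[OF assms run] by simp
  then have "\<exists>g' \<in> stack (pop_normalize A). snd (hd ?cs) = [g']"
    using g ne by (simp add: hd_map annotated_config_def del: upt_Suc)
  moreover have "fst (hd ?cs) \<in> init (pop_normalize A)"
    using run ne unfolding accepting_run_def
    by (simp add: hd_map hd_conv_nth annotated_config_def del: upt_Suc)
  moreover have "fst (last ?cs) \<in> fin (pop_normalize A)" "snd (last ?cs) = []"
    using run ne unfolding accepting_run_def
    by (simp_all add: last_map last_conv_nth annotated_config_def del: upt_Suc)
  moreover have "mstep (pop_normalize A) (?cs ! i) (?cs ! Suc i)" if "Suc i < length ?cs" for i
    using that mstep_annotated_config[OF assms run] by (simp del: upt_Suc)
  ultimately have "accepting_run (pop_normalize A) ?cs"
    using ne unfolding accepting_run_def by simp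
  moreover have "w = map (\<lambda>c. out (pop_normalize A) (fst c)) ?cs"
    unfolding w by (rule nth_equalityI) (simp_all add: annotated_config_def del: upt_Suc)
  ultimately show "w \<in> lang (pop_normalize A)"
    unfolding lang_def by blast
qed

lemma lang_pop_normalize:
  assumes "is_mpda A"
  shows "lang (pop_normalize A) = lang A"
  using lang_subset_pop_normalize[OF assms]
    lang_subset_if_mpda_hom[OF is_mpda_pop_normalize[OF assms] mpda_hom_pop_normalize]
  by blast

theorem lemma3p3:
  fixes A :: "('q, 'a, 'g) mpda"
  assumes "is_mpda A"
  shows "\<exists>A' :: (nat, 'a, nat) mpda. is_mpda A' \<and> pop_normalized A' \<and> lang A' = lang A"
proof -
  let ?B = "pop_normalize A"
  let ?A' = "map_mpda (to_nat_on (states ?B)) (to_nat_on (stack ?B)) ?B"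
  have B: "is_mpda ?B"
    using is_mpda_pop_normalize[OF assms] .
  then have "finite (states ?B)" "finite (stack ?B)"
    unfolding is_mpda_def by blast+
  then have inj: "inj_on (to_nat_on (states ?B)) (states ?B)" "inj_on (to_nat_on (stack ?B)) (stack ?B)"
    by (simp_all add: inj_on_to_nat_on countable_finite)
  have "is_mpda ?A'"
    using is_mpda_map_mpda[OF B] .
  moreover have "pop_normalized ?A'"
    using pop_normalized_map_mpda[OF B inj(2) pop_normalized_pop_normalize] .
  moreover have "lang ?A' = lang A"
    using lang_map_mpda[OF B inj] lang_pop_normalize[OF assms] by simp
  ultimately show ?thesis
    by blast
qed

end
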